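(* Let $\mathcal P$ be a finite-dimensional Poisson $n$-Lie algebra. Then for all $i,j\in\mathbb N$, all $1\le k\le n$ and all $i_1,\dots,i_k\in\mathbb N$: $$\mathcal P^i\cdot\mathcal P^j\subseteq\mathcal P^{i+j},\qquad [\mathcal P^{i_1},\dots,\mathcal P^{i_k},\mathcal P,\dots,\mathcal P]\subseteq\mathcal P^{i_1+\cdots+i_k-k+2},$$ $$\mathcal P^{(i)}\subseteq\mathcal P^{2^{i-1}},\qquad (\mathcal P^{(i)})^{(j)}=\mathcal P^{(i+j-1)},$$ where in the second relation the bracket has $n-k$ arguments equal to $\mathcal P$.
   Context: A Poisson $n$-Lie algebra is a commutative associative algebra $(\mathcal P,\cdot)$ with an $n$-linear skew-symmetric bracket satisfying the fundamental identity $[x_1,\dots,x_{n-1},[y_1,\dots,y_n]]=\sum_{i=1}^n[y_1,\dots,[x_1,\dots,x_{n-1},y_i],\dots,y_n]$ and the Leibniz rule $[y\cdot z,x_2,\dots,x_n]=y\cdot[z,x_2,\dots,x_n]+z\cdot[y,x_2,\dots,x_n]$. For subspaces, $X\cdot Y$ and $[X_1,\dots,X_n]$ denote the linear spans of the corresponding products/brackets. An ideal $\mathcal I$ is a subspace with $\mathcal P\cdot\mathcal I\subseteq\mathcal I$ and $[\mathcal I,\mathcal P,\dots,\mathcal P]\subseteq\mathcal I$. For an ideal $\mathcal I$: $\mathcal I^{(1)}=\mathcal I$, $\mathcal I^{(k+1)}=[\mathcal I^{(k)},\mathcal I^{(k)},\mathcal P,\dots,\mathcal P]+\mathcal I^{(k)}\cdot\mathcal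 I^{(k)}$; $\mathcal I^1=\mathcal I$, $\mathcal I^{k+1}=[\mathcal I^k,\mathcal I,\mathcal P,\dots,\mathcal P]+\mathcal I^k\cdot\mathcal I$. These are ideals; in particular $(\mathcal P^{(i)})^{(j)}$ is the $j$-th derived term of the ideal $\mathcal P^{(i)}$. *)

theory Defs
  imports Main "HOL.Vector_Spaces"
begin

text \<open>The n-ary bracket takes its arguments as a function x :: nat => 'v,
  the arguments being x 0, ..., x (n-1) (values at indices >= n are ignored).\<close>

definition poisson_nlie ::
  "('k::field \<Rightarrow> 'v::ab_group_add \<Rightarrow> 'v) \<Rightarrow> ('v \<Rightarrow> 'v \<Rightarrow> 'v) \<Rightarrow> ((nat \<Rightarrow> 'v) \<Rightarrow> 'v) \<Rightarrow> nat \<Rightarrow> bool"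
where
  "poisson_nlie scale mult br n \<longleftrightarrow>
     vector_space scale \<and> n \<ge> 2 \<and>
     (\<forall>x y. mult x y = mult y x) \<and>
     (\<forall>x y z. mult (mult x y) z = mult x (mult y z)) \<and>
     (\<forall>x y z. mult (x + y) z = mult x z + mult y z) \<and>
     (\<forall>a x y. mult (scale a x) y = scale a (mult x y)) \<and>
     (\<forall>x y. (\<forall>i<n. x i = y i) \<longrightarrow> br x = br y) \<and>
     (\<forall>x i y z. i < n \<longrightarrow> br (x(i := y + z)) = br (x(i := y)) + br (x(i := z))) \<and>
     (\<forall>x i a y. i < n \<longrightarrow> br (x(i := scale a y)) = scale a (br (x(i := y)))) \<and>
     (\<forall>x i j. i < j \<and> j < n \<longrightarrow> br (x(i := x j, j := x i)) = - br x) \<and>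
     (\<forall>x y. br (x(n - 1 := br y)) = (\<Sum>i<n. br (y(i := br (x(n - 1 := y i)))))) \<and>
     (\<forall>x y z. br (x(0 := mult y z)) = mult y (br (x(0 := z))) + mult z (br (x(0 := y))))"

definition fin_dim :: "('k::field \<Rightarrow> 'v::ab_group_add \<Rightarrow> 'v) \<Rightarrow> bool" where
  "fin_dim scale \<longleftrightarrow> (\<exists>B. finite B \<and> module.span scale B = UNIV)"

definition sprod :: "('k::field \<Rightarrow> 'v::ab_group_add \<Rightarrow> 'v) \<Rightarrow> ('v \<Rightarrow> 'v \<Rightarrow> 'v) \<Rightarrow> 'v set \<Rightarrow> 'v set \<Rightarrow> 'v set" where
  "sprod scale mult X Y = module.span scale {mult x y | x y. x \<in> X \<and> y \<in> Y}"

definition sbr :: "('k::field \<Rightarrow> 'v::ab_group_add \<Rightarrow> 'v) \<Rightarrow> ((nat \<Rightarrow> 'v) \<Rightarrow> 'v) \<Rightarrow> nat \<Rightarrow> (nat \<Rightarrow> 'v set) \<Rightarrow> 'v set" where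
  "sbr scale br n S = module.span scale {br x | x. \<forall>i<n. x i \<in> S i}"

definition ssum :: "('k::field \<Rightarrow> 'v::ab_group_add \<Rightarrow> 'v) \<Rightarrow> 'v set \<Rightarrow> 'v set \<Rightarrow> 'v set" where
  "ssum scale A B = module.span scale (A \<union> B)"

text \<open>Shifted series: index m corresponds to the (m+1)-th term.\<close>
primrec derived_aux where
  "derived_aux scale mult br n I 0 = I"
| "derived_aux scale mult br n I (Suc m) =
     (let J = derived_aux scale mult br n I m in
      ssum scale (sbr scale br n (\<lambda>t. if t = 0 then J else if t = 1 then J else UNIV))
                 (sprod scale mult J J))"

primrec lower_aux where
  "lower_aux scale mult br n I 0 = I"
| "lower_aux scale mult br n I (Suc m) =
     (let J = lower_aux scale mult br n I m in
      ssum scale (sbr scale br n (\<lambda>t. if t = 0 then J else if t = 1 then I else UNIV))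
                 (sprod scale mult J I))"

text \<open>I^(k) (derived series) and I^k (lower series), for k >= 1 (I^(1) = I^1 = I).\<close>
definition derived where
  "derived scale mult br n I k = derived_aux scale mult br n I (k - 1)"

definition lower where
  "lower scale mult br n I k = lower_aux scale mult br n I (k - 1)"

end

theory Submission
  imports Defs
begin

text \<open>Each term \<open>P^(m+1)\<close> of the lower series is spanned by brackets with an argument in \<open>P^m\<close>
  and by products with a factor in \<open>P^m\<close>, so membership claims can be checked on these generators:
  products are handled by associativity and the Leibniz rule, brackets by the fundamental
  identity, which moves the inner bracket outward. Induction on the degrees gives
  \<open>P^i P^j \<subseteq> P^(i+j)\<close>, then \<open>[P^i, P^j, P, ..., P] \<subseteq> P^(i+j)\<close>, and then the bound for
  brackets of \<open>k\<close> terms; \<open>P^(i) \<subseteq> P^(2^(i-1))\<close> follows by doubling, and the composition rule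
  for the derived series is immediate from its recursion.\<close>

lemma derived_aux_add:
  "derived_aux scale mult br n (derived_aux scale mult br n I a) b
    = derived_aux scale mult br n I (a + b)"
  by (induction b) (simp_all add: Let_def)

lemma derived_derived:
  assumes "1 \<le> i" "1 \<le> j"
  shows "derived scale mult br n (derived scale mult br n I i) j
    = derived scale mult br n I (i + j - 1)"
proof -
  have "i + j - 1 - 1 = i - 1 + (j - 1)" using assms by simp
  then show ?thesis unfolding derived_def derived_aux_add by simp
qed

locale poisson_nlie_algebra = vector_space scale
  for scale :: "'k::field \<Rightarrow> 'v::ab_group_add \<Rightarrow> 'v" +
  fixes mult :: "'v \<Rightarrow> 'v \<Rightarrow> 'v"
    and br :: "(nat \<Rightarrow> 'v) \<Rightarrow> 'v"
    and n :: nat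
  assumes arity_ge_2: "2 \<le> n"
    and mult_commute: "mult a b = mult b a"
    and mult_assoc: "mult (mult a b) d = mult a (mult b d)"
    and mult_add_left: "mult (a + b) d = mult a d + mult b d"
    and mult_scale_left: "mult (scale c a) b = scale c (mult a b)"
    and bracket_cong: "(\<And>i. i < n \<Longrightarrow> x i = y i) \<Longrightarrow> br x = br y"
    and bracket_add: "i < n \<Longrightarrow> br (x(i := u + v)) = br (x(i := u)) + br (x(i := v))"
    and bracket_scale: "i < n \<Longrightarrow> br (x(i := scale c u)) = scale c (br (x(i := u)))"
    and bracket_swap: "i < j \<Longrightarrow> j < n \<Longrightarrow> br (x(i := x j, j := x i)) = - br x"
    and fundamental_identity_last:
      "br (x(n - 1 := br y)) = (\<Sum>i<n. br (y(i := br (x(n - 1 := y i)))))"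
    and leibniz_first: "br (x(0 := mult a b)) = mult a (br (x(0 := b))) + mult b (br (x(0 := a)))"

lemma poisson_nlie_algebraI:
  assumes "poisson_nlie scale mult br n"
  shows "poisson_nlie_algebra scale mult br n"
  using assms
  unfolding poisson_nlie_def poisson_nlie_algebra_def poisson_nlie_algebra_axioms_def
  by (elim conjE) (intro conjI allI impI; fastforce)

context poisson_nlie_algebra
begin

lemma mult_add_right: "mult x (y + z) = mult x y + mult x z"
  by (metis mult_add_left mult_commute)

lemma mult_scale_right: "mult x (scale a y) = scale a (mult x y)"
  by (metis mult_scale_left mult_commute)

lemma linear_mult: "Vector_Spaces.linear scale scale (mult x)"
  by (simp add: linear_iff vector_space_axioms mult_add_right mult_scale_right)

lemma linear_bracket_slot: "j < n \<Longrightarrow> Vector_Spaces.linear scale scale (\<lambda>v. br (x(j := v)))"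
  by (simp add: linear_iff vector_space_axioms bracket_add bracket_scale)

lemmas mult_neg_right = module_hom.neg[OF linear_mult[unfolded linear_iff_module_hom]]
lemmas bracket_neg = module_hom.neg[OF linear_bracket_slot[unfolded linear_iff_module_hom]]

lemma bracket_transpose:
  assumes "p < n" "q < n" "p \<noteq> q"
    and "\<And>i. i < n \<Longrightarrow> z i = (if i = p then x q else if i = q then x p else x i)"
  shows "br z = - br x"
proof (cases "p < q")
  case True
  have "br z = br (x(p := x q, q := x p))"
    by (rule bracket_cong) (use assms in auto)
  then show ?thesis using bracket_swap[OF True \<open>q < n\<close>] by simp
next
  case False
  then have "q < p" using \<open>p \<noteq> q\<close> by simp
  have "br z = br (x(q := x p, p := x q))"
    by (rule bracket_cong) (use assms in auto)
  then show ?thesis using bracket_swap[OF \<open>q < p\<close> \<open>p < n\<close>] by simp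
qed

lemma bracket_move_slot:
  assumes "p < n" "q < n" "p \<noteq> q"
  shows "br (x(p := v)) = - br ((x(p := x q, q := x p))(q := v))"
  by (rule bracket_transpose[OF assms]) auto

lemma fundamental_identity:
  assumes "p < n"
  shows "br (x(p := br y)) = (\<Sum>i<n. br (y(i := br (x(p := y i)))))"
proof (cases "p = n - 1")
  case True
  then show ?thesis using fundamental_identity_last by simp
next
  case False
  have "n - 1 < n" using arity_ge_2 by simp
  define x' where "x' = x(p := x (n - 1), n - 1 := x p)"
  have sw: "br (x(p := v)) = - br (x'(n - 1 := v))" for v
    unfolding x'_def by (rule bracket_move_slot[OF \<open>p < n\<close> \<open>n - 1 < n\<close> False])
  have "br (x(p := br y)) = - (\<Sum>i<n. br (y(i := br (x'(n - 1 := y i)))))"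
    using sw fundamental_identity_last by simp
  also have "\<dots> = (\<Sum>i<n. br (y(i := br (x(p := y i)))))"
    by (simp add: sw bracket_neg sum_negf)
  finally show ?thesis .
qed

lemma leibniz:
  assumes "p < n"
  shows "br (x(p := mult y z)) = mult y (br (x(p := z))) + mult z (br (x(p := y)))"
proof (cases "p = 0")
  case True
  then show ?thesis using leibniz_first by simp
next
  case False
  have "0 < n" using arity_ge_2 by simp
  define x' where "x' = x(p := x 0, 0 := x p)"
  have sw: "br (x(p := v)) = - br (x'(0 := v))" for v
    unfolding x'_def by (rule bracket_move_slot[OF \<open>p < n\<close> \<open>0 < n\<close> False])
  show ?thesis
    by (simp add: sw leibniz_first mult_neg_right)
qed

definition lcs :: "nat \<Rightarrow> 'v set" where
  "lcs m = lower_aux scale mult br n UNIV m"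

lemma lower_eq_lcs: "lower scale mult br n UNIV i = lcs (i - 1)"
  by (simp add: lower_def lcs_def)

lemma lcs_0 [simp]: "lcs 0 = UNIV"
  by (simp add: lcs_def)

lemma lcs_Suc:
  "lcs (Suc m) = span (span {br x |x. \<forall>i<n. x i \<in> (if i = 0 then lcs m else UNIV)}
     \<union> span {mult a b |a b. a \<in> lcs m})"
  by (simp add: lcs_def ssum_def sbr_def sprod_def Let_def)

lemma subspace_lcs: "subspace (lcs m)"
  by (cases m) (simp_all add: lcs_Suc)

lemma bracket_first_mem_lcs_Suc: "x 0 \<in> lcs m \<Longrightarrow> br x \<in> lcs (Suc m)"
  unfolding lcs_Suc by (intro span_base UnI1) auto

lemma mult_mem_lcs_Suc: "a \<in> lcs m \<Longrightarrow> mult a b \<in> lcs (Suc m)"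
  unfolding lcs_Suc by (intro span_base UnI2) auto

lemma lcs_Suc_subset:
  assumes "subspace T"
    and "\<And>x. x 0 \<in> lcs m \<Longrightarrow> br x \<in> T"
    and "\<And>a b. a \<in> lcs m \<Longrightarrow> mult a b \<in> T"
  shows "lcs (Suc m) \<subseteq> T"
  unfolding lcs_Suc using assms arity_ge_2
  by (intro span_minimal Un_least) (auto intro!: span_minimal)

lemma linear_image_lcs_Suc:
  assumes f: "Vector_Spaces.linear scale scale f" and T: "subspace T" and v: "v \<in> lcs (Suc m)"
    and "\<And>x. x 0 \<in> lcs m \<Longrightarrow> f (br x) \<in> T"
    and "\<And>a b. a \<in> lcs m \<Longrightarrow> f (mult a b) \<in> T"
  shows "f v \<in> T"
proof -
  have "lcs (Suc m) \<subseteq> f -` T"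
    using assms module_hom.subspace_vimage[OF f[unfolded linear_iff_module_hom] T]
    by (intro lcs_Suc_subset) auto
  then show ?thesis using v by auto
qed

lemma bracket_mem_lcs_Suc:
  assumes "i < n" "x i \<in> lcs m"
  shows "br x \<in> lcs (Suc m)"
proof (cases "i = 0")
  case True
  then show ?thesis using assms bracket_first_mem_lcs_Suc by simp
next
  case False
  have "br x = - br (x(0 := x i, i := x 0))"
    by (rule bracket_transpose[OF \<open>i < n\<close> _ False]) (use arity_ge_2 in auto)
  moreover have "br (x(0 := x i, i := x 0)) \<in> lcs (Suc m)"
    using bracket_first_mem_lcs_Suc assms False by simp
  ultimately show ?thesis using subspace_neg[OF subspace_lcs] by simp
qed

lemma mult_mem_lcs: "a \<in> lcs i \<Longrightarrow> b \<in> lcs j \<Longrightarrow> mult a b \<in> lcs (i + j + 1)"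
proof (induction j arbitrary: i a b)
  case 0
  then show ?case using mult_mem_lcs_Suc by simp
next
  case (Suc j)
  show ?case
  proof (rule linear_image_lcs_Suc[OF linear_mult subspace_lcs \<open>b \<in> lcs (Suc j)\<close>])
    fix x :: "nat \<Rightarrow> 'v" assume x0: "x 0 \<in> lcs j"
    have "br (x(0 := mult a (x 0))) \<in> lcs (i + Suc j + 1)"
      using bracket_first_mem_lcs_Suc Suc.IH[OF Suc.prems(1) x0] by simp
    moreover have "mult (x 0) (br (x(0 := a))) \<in> lcs (i + Suc j + 1)"
      using Suc.IH[OF bracket_first_mem_lcs_Suc x0, of "x(0 := a)"] Suc.prems(1)
      by (simp add: mult_commute[of "x 0"])
    moreover have "mult a (br x) = br (x(0 := mult a (x 0))) - mult (x 0) (br (x(0 := a)))"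
      using leibniz_first[of x a "x 0"] by (simp add: eq_diff_eq)
    ultimately show "mult a (br x) \<in> lcs (i + Suc j + 1)"
      using subspace_diff[OF subspace_lcs] by simp
  next
    fix c d assume "c \<in> lcs j"
    then have "mult a c \<in> lcs (i + j + 1)" using Suc.IH Suc.prems(1) by blast
    then show "mult a (mult c d) \<in> lcs (i + Suc j + 1)"
      using mult_mem_lcs_Suc[of "mult a c" _ d] by (simp add: mult_assoc)
  qed
qed

text \<open>Induction step on the degree \<open>Suc c\<close> of one argument \<open>x j\<close>: for a bracket generator
  the fundamental identity yields brackets having either a lower-degree argument in slot \<open>j\<close> or
  two arguments of degrees \<open>c\<close> and \<open>M\<close>; for a product the Leibniz rule applies.\<close>
lemma bracket_mem_lcs_step:
  assumes j: "j < n" and xj: "x j \<in> lcs (Suc c)"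
    and slot: "\<And>v. v \<in> lcs c \<Longrightarrow> br (x(j := v)) \<in> lcs (c + M)"
    and free: "\<And>w. br (x(j := w)) \<in> lcs M"
    and two: "\<And>y t. 0 < t \<Longrightarrow> t < n \<Longrightarrow> y 0 \<in> lcs c \<Longrightarrow> y t \<in> lcs M \<Longrightarrow>
      br y \<in> lcs (c + M + 1)"
  shows "br x \<in> lcs (Suc c + M)"
proof -
  have "br (x(j := x j)) \<in> lcs (Suc c + M)"
  proof (rule linear_image_lcs_Suc[OF linear_bracket_slot[OF j] subspace_lcs xj])
    fix y :: "nat \<Rightarrow> 'v" assume y0: "y 0 \<in> lcs c"
    have "br (y(t := br (x(j := y t)))) \<in> lcs (Suc c + M)" if "t < n" for t
    proof (cases "t = 0")
      case True
      then show ?thesis using bracket_first_mem_lcs_Suc slot y0 by simp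
    next
      case False
      then show ?thesis using two[of t "y(t := br (x(j := y t)))"] that y0 free by simp
    qed
    then show "br (x(j := br y)) \<in> lcs (Suc c + M)"
      unfolding fundamental_identity[OF j] by (intro subspace_sum[OF subspace_lcs]) auto
  next
    fix v w assume v: "v \<in> lcs c"
    have "mult v (br (x(j := w))) \<in> lcs (Suc c + M)"
      using mult_mem_lcs[OF v free] by simp
    moreover have "mult w (br (x(j := v))) \<in> lcs (Suc c + M)"
      using mult_mem_lcs[OF slot[OF v], of w 0] by (simp add: mult_commute[of w])
    ultimately show "br (x(j := mult v w)) \<in> lcs (Suc c + M)"
      unfolding leibniz[OF j] by (rule subspace_add[OF subspace_lcs])
  qed
  then show ?thesis by simp
qed

lemma bracket_two_slots_mem_lcs:
  assumes "i < n" "j < n" "i \<noteq> j" "x i \<in> lcs a" "x j \<in> lcs b"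
  shows "br x \<in> lcs (a + b + 1)"
  using assms
proof (induction b arbitrary: a x i j)
  case 0
  then show ?case using bracket_mem_lcs_Suc by simp
next
  case (Suc b)
  have "br x \<in> lcs (Suc b + (a + 1))"
  proof (rule bracket_mem_lcs_step[of j x b])
    show "j < n" "x j \<in> lcs (Suc b)" using Suc.prems by simp_all
    show "br (x(j := v)) \<in> lcs (b + (a + 1))" if "v \<in> lcs b" for v
      using Suc.IH[of i j "x(j := v)" a] Suc.prems that by (simp add: fun_upd_def add.commute)
    show "br (x(j := w)) \<in> lcs (a + 1)" for w
      using bracket_mem_lcs_Suc[of i "x(j := w)" a] Suc.prems by simp
    show "br y \<in> lcs (b + (a + 1) + 1)"
      if "0 < t" "t < n" "y 0 \<in> lcs b" "y t \<in> lcs (a + 1)" for y t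
      using Suc.IH[of t 0 y "a + 1"] that by (simp add: ac_simps)
  qed
  then show ?case by (simp add: ac_simps)
qed

lemma bracket_mem_lcs:
  assumes "k \<le> n" "\<And>i. i < k \<Longrightarrow> x i \<in> lcs (e i)"
  shows "br x \<in> lcs (sum e {..<k} + 1)"
  using assms
proof (induction k arbitrary: x)
  case 0
  then show ?case using bracket_mem_lcs_Suc[of 0 x 0] arity_ge_2 by simp
next
  case (Suc k)
  let ?S = "sum e {..<k}"
  have first_k: "br y \<in> lcs (?S + 1)" if "\<And>i. i < k \<Longrightarrow> y i \<in> lcs (e i)" for y
    using Suc.IH Suc.prems(1) that by simp
  have "br y \<in> lcs (c + (?S + 1))"
    if "\<And>i. i < k \<Longrightarrow> y i \<in> lcs (e i)" "y k \<in> lcs c" for y c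
    using that
  proof (induction c arbitrary: y)
    case 0
    then show ?case using first_k by simp
  next
    case (Suc c)
    show ?case
    proof (rule bracket_mem_lcs_step[of k y c])
      show "k < n" using \<open>Suc k \<le> n\<close> by simp
      show "y k \<in> lcs (Suc c)" by (fact Suc.prems(2))
      show "br (y(k := v)) \<in> lcs (c + (?S + 1))" if "v \<in> lcs c" for v
        using Suc.IH[of "y(k := v)"] Suc.prems(1) that by (simp add: fun_upd_def)
      show "br (y(k := w)) \<in> lcs (?S + 1)" for w
        using first_k[of "y(k := w)"] Suc.prems(1) by simp
      show "br z \<in> lcs (c + (?S + 1) + 1)"
        if "0 < t" "t < n" "z 0 \<in> lcs c" "z t \<in> lcs (?S + 1)" for z t
        using bracket_two_slots_mem_lcs[of 0 t z c "?S + 1"] that by simp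
    qed
  qed
  then show ?case using Suc.prems by (simp add: ac_simps)
qed

lemma sprod_lower_subset:
  assumes "1 \<le> i" "1 \<le> j"
  shows "sprod scale mult (lower scale mult br n UNIV i) (lower scale mult br n UNIV j)
    \<subseteq> lower scale mult br n UNIV (i + j)"
proof -
  have index: "i + j - 1 = i - 1 + (j - 1) + 1" using assms by simp
  have "mult a b \<in> lcs (i + j - 1)" if "a \<in> lcs (i - 1)" "b \<in> lcs (j - 1)" for a b
    unfolding index by (rule mult_mem_lcs[OF that])
  then show ?thesis
    unfolding sprod_def lower_eq_lcs by (intro span_minimal subspace_lcs) auto
qed

lemma sbr_lower_subset:
  assumes "k \<le> n" "\<forall>m<k. 1 \<le> ii m"
  shows "sbr scale br n (\<lambda>m. if m < k then lower scale mult br n UNIV (ii m) else UNIV)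
    \<subseteq> lower scale mult br n UNIV ((\<Sum>m<k. ii m) + 2 - k)"
proof -
  have "(\<Sum>m<k. ii m) = (\<Sum>m<k. (ii m - 1) + 1)"
    using assms(2) by (intro sum.cong) auto
  also have "\<dots> = (\<Sum>m<k. ii m - 1) + k"
    unfolding sum.distrib by simp
  finally have "(\<Sum>m<k. ii m) + 2 - k - 1 = (\<Sum>m<k. ii m - 1) + 1" by simp
  moreover have "br x \<in> lcs ((\<Sum>m<k. ii m - 1) + 1)"
    if x: "\<forall>i<n. x i \<in> (if i < k then lcs (ii i - 1) else UNIV)" for x
  proof (rule bracket_mem_lcs[OF assms(1)])
    show "x i \<in> lcs (ii i - 1)" if "i < k" for i
      using x[rule_format, of i] that assms(1) by simp
  qed
  ultimately show ?thesis
    unfolding sbr_def lower_eq_lcs by (intro span_minimal subspace_lcs) auto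
qed

lemma derived_aux_subset_lcs: "derived_aux scale mult br n UNIV m \<subseteq> lcs (2 ^ m - 1)"
proof (induction m)
  case 0
  then show ?case by simp
next
  case (Suc m)
  let ?D = "derived_aux scale mult br n UNIV m"
  have "(2::nat) ^ Suc m = 2 ^ m + 2 ^ m" "(1::nat) \<le> 2 ^ m" by simp_all
  then have double: "2 ^ m - 1 + (2 ^ m - 1) + 1 = (2::nat) ^ Suc m - 1" by linarith
  have "br x \<in> lcs (2 ^ Suc m - 1)"
    if x: "\<forall>i<n. x i \<in> (if i = 0 then ?D else if i = 1 then ?D else UNIV)" for x
  proof -
    have "x 0 \<in> lcs (2 ^ m - 1)" "x 1 \<in> lcs (2 ^ m - 1)"
      using x[rule_format, of 0] x[rule_format, of 1] arity_ge_2 Suc.IH by auto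
    then show ?thesis
      unfolding double[symmetric]
      by (intro bracket_two_slots_mem_lcs[of 0 1]) (use arity_ge_2 in auto)
  qed
  moreover have "mult a b \<in> lcs (2 ^ Suc m - 1)" if "a \<in> ?D" "b \<in> ?D" for a b
    using mult_mem_lcs[of a "2 ^ m - 1" b "2 ^ m - 1"] that Suc.IH
    unfolding double by auto
  ultimately show ?case
    unfolding derived_aux.simps Let_def ssum_def sbr_def sprod_def
    by (intro span_minimal Un_least subspace_lcs) (auto intro!: span_minimal subspace_lcs)
qed

lemma derived_subset_lower:
  "1 \<le> i \<Longrightarrow> derived scale mult br n UNIV i \<subseteq> lower scale mult br n UNIV (2 ^ (i - 1))"
  unfolding lower_eq_lcs derived_def by (rule derived_aux_subset_lcs)

end

theorem lemma5p2:
  fixes scale :: "'k::field \<Rightarrow> 'v::ab_group_add \<Rightarrow> 'v"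
    and mult :: "'v \<Rightarrow> 'v \<Rightarrow> 'v"
    and br :: "(nat \<Rightarrow> 'v) \<Rightarrow> 'v"
    and n :: nat
  assumes P: "poisson_nlie scale mult br n"
    and fd: "fin_dim scale"
  shows
    "(\<forall>i j. 1 \<le> i \<longrightarrow> 1 \<le> j \<longrightarrow>
        sprod scale mult (lower scale mult br n UNIV i) (lower scale mult br n UNIV j)
          \<subseteq> lower scale mult br n UNIV (i + j))
   \<and> (\<forall>k (ii :: nat \<Rightarrow> nat). 1 \<le> k \<longrightarrow> k \<le> n \<longrightarrow> (\<forall>m<k. 1 \<le> ii m) \<longrightarrow>
        sbr scale br n (\<lambda>m. if m < k then lower scale mult br n UNIV (ii m) else UNIV)
          \<subseteq> lower scale mult br n UNIV ((\<Sum>m<k. ii m) + 2 - k))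
   \<and> (\<forall>i. 1 \<le> i \<longrightarrow>
        derived scale mult br n UNIV i \<subseteq> lower scale mult br n UNIV (2 ^ (i - 1)))
   \<and> (\<forall>i j. 1 \<le> i \<longrightarrow> 1 \<le> j \<longrightarrow>
        derived scale mult br n (derived scale mult br n UNIV i) j
          = derived scale mult br n UNIV (i + j - 1))"
proof -
  interpret poisson_nlie_algebra scale mult br n
    using P by (rule poisson_nlie_algebraI)
  show ?thesis
    using sprod_lower_subset sbr_lower_subset derived_subset_lower derived_derived by blast
qed

end
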